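(* Let $\alpha\in(1,2)$ and let $L$ be slowly varying at $\infty$ and bounded away from $0$ and $\infty$ on every compact interval of $[0,\infty)$. Let $(\xi_i)_{i\ge1}$ be i.i.d. real random variables distributed as $\xi$, with \[\mathbf{P}(|\xi|\geq t)\leq t^{-\alpha}L(t)\qquad\forall t\geq 1,\] and let $g$ be any non-decreasing asymptotic inverse of $t\mapsto t^\alpha/L(t)$; set $a_n=g(n)$. Then for every $\rho<\alpha$ there is a constant $C_\rho<\infty$ such that \[\mathbf{P}\left(\left|\sum_{i=1}^n\frac{\xi_i-\mathbf{E}[\xi_i]}{a_n}\right|>\lambda\right)\leq C_\rho\lambda^{-\rho}\qquad\text{for all } n\ge1,\ \lambda\ge1.\] In particular, with $S_n=\sum_{i=1}^n\xi_i$, the sequence $\left(|S_n-n\mathbf{E}[\xi]|/a_n\right)_{n\ge1}$ is tight.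
   Context: A positive measurable function $L$ is slowly varying at $\infty$ if $L(ts)/L(t)\to1$ as $t\to\infty$ for every $s>0$. A function $f$ is regularly varying with index $\alpha$ if $f(t)=t^\alpha L(t)$ with $L$ slowly varying. If $f$ is regularly varying with index $\alpha>0$, an asymptotic inverse of $f$ is a positive measurable function $g$ (regularly varying with index $1/\alpha$) with $f(g(t))\sim g(f(t))\sim t$ as $t\to\infty$; such $g$ exists, is asymptotically unique and can be chosen non-decreasing. *)

theory Defs
  imports "HOL-Probability.Probability" "HOL-Library.Landau_Symbols"
begin

definition slowly_varying :: "(real \<Rightarrow> real) \<Rightarrow> bool" where
  "slowly_varying L \<longleftrightarrow> L \<in> borel_measurable borel \<and> (\<forall>t>0. L t > 0) \<and>
     (\<forall>s>0. ((\<lambda>t. L (t * s) / L t) \<longlongrightarrow> 1) at_top)"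

definition asymptotic_inverse :: "(real \<Rightarrow> real) \<Rightarrow> (real \<Rightarrow> real) \<Rightarrow> bool" where
  "asymptotic_inverse f g \<longleftrightarrow> g \<in> borel_measurable borel \<and> (\<forall>t>0. g t > 0) \<and>
     (\<lambda>t. f (g t)) \<sim>[at_top] (\<lambda>t. t) \<and> (\<lambda>t. g (f t)) \<sim>[at_top] (\<lambda>t. t)"

definition locally_bounded_away :: "(real \<Rightarrow> real) \<Rightarrow> bool" where
  "locally_bounded_away L \<longleftrightarrow>
     (\<forall>T\<ge>0. \<exists>c>0. \<exists>C. \<forall>t\<in>{0..T}. c \<le> L t \<and> L t \<le> C)"

end

theory Submission
  imports Defs
begin

text \<open>Truncate at level \<open>T = a\<^sub>n \<lambda>\<close>. The deviation event lies in the union of the events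
  \<open>|\<xi>\<^sub>i| \<ge> T\<close>, \<open>i \<le> n\<close>, and of the event that the centred sum of the truncated variables exceeds
  \<open>T\<close>; by Chebyshev the latter has probability at most
  \<open>(n E[\<xi>\<^sup>2; |\<xi>| \<le> T] + (n E[|\<xi>|; |\<xi>| > T])\<^sup>2) / T\<^sup>2\<close>. Splitting the truncated moments into dyadic
  shells and applying Potter's bounds for \<open>L\<close> shows that they are \<open>O(T\<^sup>2 \<phi>(T))\<close> and \<open>O(T \<phi>(T))\<close>,
  where \<open>\<phi>(t) = t\<^sup>-\<^sup>\<alpha> L(t)\<close>, so every term is \<open>O(n \<phi>(T))\<close>. As \<open>a\<^sub>n\<close> is an asymptotic inverse
  of \<open>t\<^sup>\<alpha> / L(t)\<close>, \<open>n \<phi>(a\<^sub>n)\<close> is bounded, and Potter's bound once more gives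
  \<open>n \<phi>(a\<^sub>n \<lambda>) = O(\<lambda>\<^sup>\<delta>\<^sup>-\<^sup>\<alpha>)\<close> for every \<open>\<delta> > 0\<close>. Tightness is the case \<open>\<rho> = 1\<close>.\<close>

section \<open>Slowly varying functions\<close>

lemma slowly_varying_pos: "slowly_varying L \<Longrightarrow> t > 0 \<Longrightarrow> L t > 0"
  unfolding slowly_varying_def by auto

lemma slowly_varying_ln_exp_shift:
  assumes "slowly_varying L"
  shows "((\<lambda>x. ln (L (exp (x + w))) - ln (L (exp x))) \<longlongrightarrow> 0) at_top"
proof -
  have "((\<lambda>t. L (t * exp w) / L t) \<longlongrightarrow> 1) at_top"
    using assms unfolding slowly_varying_def by auto
  then have "((\<lambda>x. L (exp x * exp w) / L (exp x)) \<longlongrightarrow> 1) at_top"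
    using exp_at_top by (rule filterlim_compose)
  then have "((\<lambda>x. ln (L (exp x * exp w) / L (exp x))) \<longlongrightarrow> ln 1) at_top"
    by (intro tendsto_ln) auto
  moreover have "L (exp x * exp w) \<noteq> 0" "L (exp x) \<noteq> 0" for x
    using slowly_varying_pos[OF assms, of "exp x * exp w"] slowly_varying_pos[OF assms, of "exp x"]
    by auto
  ultimately show ?thesis
    by (simp add: exp_add ln_div)
qed

text \<open>The uniform convergence theorem for slowly varying functions, in additive form
  (\<open>h = ln \<circ> L \<circ> exp\<close>).\<close>

lemma measure_large_increments_tendsto_0:
  fixes h :: "real \<Rightarrow> real"
  assumes [measurable]: "h \<in> borel_measurable borel"
    and h_lim: "\<And>w. ((\<lambda>x. h (x + w) - h x) \<longlongrightarrow> 0) at_top" and "e > 0"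
  shows "((\<lambda>c. measure lborel {w \<in> {-1..2}. e \<le> \<bar>h (c + w) - h c\<bar>}) \<longlongrightarrow> 0) at_top"
proof -
  define bad where "bad c = {w \<in> {-1..2}. e \<le> \<bar>h (c + w) - h c\<bar>}" for c
  have [measurable]: "bad c \<in> sets borel" for c
    unfolding bad_def by measurable
  have "((\<lambda>c. integral\<^sup>L lborel (\<lambda>w. indicator (bad c) w :: real))
      \<longlongrightarrow> integral\<^sup>L lborel (\<lambda>w::real. 0 :: real)) at_top"
  proof (rule integral_dominated_convergence_at_top[where w="indicator {-1..2::real}"])
    show "AE w in lborel. ((\<lambda>c. indicator (bad c) w :: real) \<longlongrightarrow> 0) at_top"
    proof (rule AE_I2, rule tendsto_eventually)
      fix w
      have "\<forall>\<^sub>F c in at_top. \<bar>h (c + w) - h c\<bar> < e"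
        using order_tendstoD(2)[OF tendsto_rabs[OF h_lim[of w]], of e] \<open>e > 0\<close> by simp
      then show "\<forall>\<^sub>F c in at_top. (indicator (bad c) w :: real) = 0"
        by eventually_elim (auto simp: bad_def)
    qed
    show "\<forall>\<^sub>F c in at_top. AE w in lborel. norm (indicator (bad c) w :: real) \<le> indicator {-1..2} w"
      by (intro always_eventually allI AE_I2) (auto simp: bad_def split: split_indicator)
  qed (auto intro!: integrable_real_indicator)
  then show ?thesis
    by (simp add: bad_def)
qed

lemma uniform_increment_bound:
  fixes h :: "real \<Rightarrow> real"
  assumes h_meas[measurable]: "h \<in> borel_measurable borel"
    and h_lim: "\<And>w. ((\<lambda>x. h (x + w) - h x) \<longlongrightarrow> 0) at_top" and e: "e > 0"
  shows "\<exists>X. \<forall>x\<ge>X. \<forall>v\<in>{0..1}. \<bar>h (x + v) - h x\<bar> \<le> e"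
proof -
  define near where "near c = {z \<in> {c-1..c+2}. e/2 \<le> \<bar>h z - h c\<bar>}" for c
  have [measurable]: "near c \<in> sets borel" for c
    unfolding near_def by measurable
  have "measure lborel (near c) = measure lborel {w \<in> {-1..2}. e/2 \<le> \<bar>h (c + w) - h c\<bar>}" for c
  proof -
    have "measure lborel (near c) = measure (distr lborel borel ((+) c)) (near c)"
      by (simp add: lborel_distr_plus)
    also have "\<dots> = measure lborel {w \<in> {-1..2}. e/2 \<le> \<bar>h (c + w) - h c\<bar>}"
      by (subst measure_distr) (auto simp: near_def intro!: arg_cong[where f="measure lborel"])
    finally show ?thesis .
  qed
  then have "((\<lambda>c. measure lborel (near c)) \<longlongrightarrow> 0) at_top"
    using measure_large_increments_tendsto_0[OF h_meas h_lim, of "e/2"] e by simp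
  then have "\<forall>\<^sub>F c in at_top. measure lborel (near c) < 1/2"
    by (rule order_tendstoD(2)) simp
  then obtain X where X: "\<And>c. c \<ge> X \<Longrightarrow> measure lborel (near c) < 1/2"
    by (auto simp: eventually_at_top_linorder)
  have "\<bar>h (x + v) - h x\<bar> \<le> e" if x: "x \<ge> X" and v: "v \<in> {0..1}" for x v
  proof (rule ccontr)
    assume big: "\<not> \<bar>h (x + v) - h x\<bar> \<le> e"
    define y where "y = x + v"
    \<comment> \<open>the two exceptional sets would cover an interval of length 1\<close>
    have "{x+1..x+2} \<subseteq> near x \<union> near y"
    proof
      fix z assume z: "z \<in> {x+1..x+2}"
      have "\<bar>h y - h x\<bar> \<le> \<bar>h z - h x\<bar> + \<bar>h z - h y\<bar>"
        by arith
      then show "z \<in> near x \<union> near y"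
        using big z v by (auto simp: near_def y_def)
    qed
    moreover have "near x \<union> near y \<in> fmeasurable lborel"
      by (rule fmeasurableI2[OF fmeasurable_cbox[of "x - 1" "y + 2"]])
        (use v in \<open>auto simp: near_def y_def\<close>)
    ultimately have "measure lborel {x+1..x+2} \<le> measure lborel (near x \<union> near y)"
      by (intro measure_mono_fmeasurable) auto
    also have "\<dots> \<le> measure lborel (near x) + measure lborel (near y)"
      by (rule measure_Un_le) auto
    also have "\<dots> < 1"
      using X[of x] X[of y] x v by (simp add: y_def)
    finally show False
      by simp
  qed
  then show ?thesis
    by blast
qed

lemma increment_bound_linear:
  fixes h :: "real \<Rightarrow> real"
  assumes local: "\<And>x v. x \<ge> X \<Longrightarrow> v \<in> {0..1} \<Longrightarrow> \<bar>h (x + v) - h x\<bar> \<le> d"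
    and "x \<ge> X" "u \<ge> 0"
  shows "\<bar>h (x + u) - h x\<bar> \<le> d * (u + 1)"
proof -
  have "d \<ge> 0"
    using local[of X 0] by simp
  have steps: "\<bar>h (x + u) - h x\<bar> \<le> d * real k" if "x \<ge> X" "u \<in> {0..real k}" for k x u
    using that
  proof (induction k arbitrary: x u)
    case 0
    then show ?case by simp
  next
    case (Suc k)
    show ?case
    proof (cases "u \<le> 1")
      case True
      then have "\<bar>h (x + u) - h x\<bar> \<le> d"
        using local Suc.prems by auto
      also have "\<dots> \<le> d * real (Suc k)"
        using \<open>d \<ge> 0\<close> by (simp add: algebra_simps)
      finally show ?thesis .
    next
      case False
      have "\<bar>h ((x + 1) + (u - 1)) - h (x + 1)\<bar> \<le> d * real k"
        using Suc.IH[of "x + 1" "u - 1"] Suc.prems False by auto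
      moreover have "\<bar>h (x + 1) - h x\<bar> \<le> d"
        using local Suc.prems by auto
      ultimately show ?thesis
        by (simp add: algebra_simps)
    qed
  qed
  have "u \<in> {0..real (nat \<lceil>u\<rceil>)}" "real (nat \<lceil>u\<rceil>) \<le> u + 1"
    using assms(3) by auto
  then show ?thesis
    using steps[OF assms(2), of u "nat \<lceil>u\<rceil>"] \<open>d \<ge> 0\<close> by (meson mult_left_mono order_trans)
qed

lemma increment_bound_global:
  fixes h :: "real \<Rightarrow> real"
  assumes far: "\<And>x u. x \<ge> X \<Longrightarrow> u \<ge> 0 \<Longrightarrow> \<bar>h (x + u) - h x\<bar> \<le> d * (u + 1)"
    and near: "\<And>x. x \<le> X \<Longrightarrow> \<bar>h x\<bar> \<le> H"
    and "u \<ge> 0"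
  shows "\<bar>h (x + u) - h x\<bar> \<le> (d + 2 * H) + d * u"
proof -
  have "d \<ge> 0" "H \<ge> 0"
    using far[of X 0] near[of X] by auto
  consider "X \<le> x" | "x + u \<le> X" | "x < X" "X < x + u"
    by linarith
  then show ?thesis
  proof cases
    case 1
    then show ?thesis
      using far[of x u] \<open>u \<ge> 0\<close> \<open>H \<ge> 0\<close> by (simp add: algebra_simps)
  next
    case 2
    have "\<bar>h x\<bar> \<le> H" "\<bar>h (x + u)\<bar> \<le> H"
      using 2 \<open>u \<ge> 0\<close> near by auto
    then show ?thesis
      using abs_triangle_ineq4[of "h (x + u)" "h x"]
        mult_nonneg_nonneg[OF \<open>d \<ge> 0\<close> \<open>u \<ge> 0\<close>] \<open>d \<ge> 0\<close> by linarith
  next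
    case 3
    have "\<bar>h (X + (x + u - X)) - h X\<bar> \<le> d * ((x + u - X) + 1)"
      using far[of X "x + u - X"] 3 by simp
    also have "\<dots> \<le> d * (u + 1)"
      using 3 \<open>d \<ge> 0\<close> by (intro mult_left_mono) auto
    finally show ?thesis
      using near[of x] near[of X] 3 by (simp add: algebra_simps)
  qed
qed

lemma potter_log_bound:
  assumes L: "slowly_varying L" "locally_bounded_away L" and d: "d > 0"
  obtains a where "\<And>t s. t > 0 \<Longrightarrow> s \<ge> 1 \<Longrightarrow> \<bar>ln (L (t * s)) - ln (L t)\<bar> \<le> a + d * ln s"
proof -
  define h where "h x = ln (L (exp x))" for x
  have [measurable]: "L \<in> borel_measurable borel"
    using L(1) unfolding slowly_varying_def by simp
  have "h \<in> borel_measurable borel"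
    unfolding h_def by measurable
  then obtain X where "\<And>x v. x \<ge> X \<Longrightarrow> v \<in> {0..1} \<Longrightarrow> \<bar>h (x + v) - h x\<bar> \<le> d"
    using uniform_increment_bound[of h d] slowly_varying_ln_exp_shift[OF L(1)] d
    unfolding h_def by blast
  note far = increment_bound_linear[of X h d, OF this]
  obtain c C where "c > 0" and cC: "\<And>t. t \<in> {0..exp X} \<Longrightarrow> c \<le> L t \<and> L t \<le> C"
    using L(2) unfolding locally_bounded_away_def by (meson exp_ge_zero)
  have near: "\<bar>h x\<bar> \<le> max \<bar>ln c\<bar> \<bar>ln C\<bar>" if "x \<le> X" for x
  proof -
    have "c \<le> L (exp x)" "L (exp x) \<le> C"
      using cC[of "exp x"] that by auto
    then have "ln c \<le> h x" "h x \<le> ln C"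
      using \<open>c > 0\<close> by (auto simp: h_def)
    then show ?thesis
      by linarith
  qed
  show ?thesis
  proof (rule that[of "d + 2 * max \<bar>ln c\<bar> \<bar>ln C\<bar>"])
    fix t s :: real
    assume "t > 0" "s \<ge> 1"
    then show "\<bar>ln (L (t * s)) - ln (L t)\<bar> \<le> d + 2 * max \<bar>ln c\<bar> \<bar>ln C\<bar> + d * ln s"
      using increment_bound_global[of X h d, OF far near, of "ln s" "ln t"]
      by (simp add: h_def exp_add)
  qed
qed

lemma potter_bound:
  assumes L: "slowly_varying L" "locally_bounded_away L" and d: "d > 0"
  obtains A where "A > 0"
    and "\<And>t s. t > 0 \<Longrightarrow> s \<ge> 1 \<Longrightarrow> L (t * s) \<le> A * s powr d * L t"
    and "\<And>t s. t > 0 \<Longrightarrow> s \<ge> 1 \<Longrightarrow> L t \<le> A * s powr d * L (t * s)"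
proof -
  obtain a where a: "\<And>t s. t > 0 \<Longrightarrow> s \<ge> 1 \<Longrightarrow> \<bar>ln (L (t * s)) - ln (L t)\<bar> \<le> a + d * ln s"
    by (rule potter_log_bound[OF L d]) blast+
  show ?thesis
  proof (rule that[of "exp a"])
    fix t s :: real
    assume "t > 0" "s \<ge> 1"
    then have pos: "L (t * s) > 0" "L t > 0"
      using slowly_varying_pos[OF L(1)] by auto
    have exp_eq: "exp (a + d * ln s + ln u) = exp a * s powr d * u" if "u > 0" for u
      using that \<open>s \<ge> 1\<close> by (simp add: exp_add powr_def ac_simps)
    have ln_le: "ln (L (t * s)) \<le> a + d * ln s + ln (L t)" "ln (L t) \<le> a + d * ln s + ln (L (t * s))"
      using a[OF \<open>t > 0\<close> \<open>s \<ge> 1\<close>] by (auto simp: abs_le_iff)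
    have "L (t * s) = exp (ln (L (t * s)))"
      using pos by simp
    also have "\<dots> \<le> exp (a + d * ln s + ln (L t))"
      using ln_le(1) by simp
    finally show "L (t * s) \<le> exp a * s powr d * L t"
      using exp_eq[OF pos(2)] by simp
    have "L t = exp (ln (L t))"
      using pos by simp
    also have "\<dots> \<le> exp (a + d * ln s + ln (L (t * s)))"
      using ln_le(2) by simp
    finally show "L t \<le> exp a * s powr d * L (t * s)"
      using exp_eq[OF pos(1)] by simp
  qed simp
qed

lemma tail_bound_all_positive:
  fixes P L :: "real \<Rightarrow> real"
  assumes L: "locally_bounded_away L" "\<And>t. t > 0 \<Longrightarrow> L t > 0" and \<alpha>: "\<alpha> \<ge> 0"
    and large: "\<And>t. t \<ge> 1 \<Longrightarrow> P t \<le> t powr (-\<alpha>) * L t" and le_one: "\<And>t. P t \<le> 1"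
  obtains K where "K \<ge> 0" and "\<And>t. t > 0 \<Longrightarrow> P t \<le> K * t powr (-\<alpha>) * L t"
proof -
  obtain c C where "c > 0" and c: "\<And>t. t \<in> {0..1} \<Longrightarrow> c \<le> L t \<and> L t \<le> C"
    using L(1) unfolding locally_bounded_away_def by (meson zero_le_one)
  define K where "K = max 1 (1 / c)"
  have "P t \<le> K * t powr (-\<alpha>) * L t" if "t > 0" for t
  proof (cases "t \<ge> 1")
    case True
    have "P t \<le> 1 * (t powr (-\<alpha>) * L t)"
      using large[OF True] by simp
    also have "\<dots> \<le> K * (t powr (-\<alpha>) * L t)"
      using L(2)[OF that] by (intro mult_right_mono) (auto simp: K_def)
    finally show ?thesis
      by (simp add: mult.assoc)
  next
    case False
    have "1 \<le> t powr (-\<alpha>)"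
      using False that \<alpha> by (simp add: powr_minus one_le_inverse powr_le1)
    then have "1 / c \<le> K * t powr (-\<alpha>)"
      using mult_left_mono[of 1 "t powr (-\<alpha>)" K] \<open>c > 0\<close> by (simp add: K_def)
    moreover have "c \<le> L t"
      using c[of t] False that by auto
    ultimately have "1 / c * c \<le> K * t powr (-\<alpha>) * L t"
      using \<open>c > 0\<close> by (intro mult_mono) (auto simp: K_def)
    then show ?thesis
      using le_one[of t] \<open>c > 0\<close> by simp
  qed
  then show ?thesis
    by (intro that[of K]) (auto simp: K_def)
qed

lemma potter_bound_regular_variation:
  fixes L :: "real \<Rightarrow> real"
  assumes K: "K \<ge> 0" and pos: "\<And>t. t > 0 \<Longrightarrow> L t > 0"
    and up: "\<And>t s. t > 0 \<Longrightarrow> s \<ge> 1 \<Longrightarrow> L (t * s) \<le> A * s powr d * L t"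
    and down: "\<And>t s. t > 0 \<Longrightarrow> s \<ge> 1 \<Longrightarrow> L t \<le> A * s powr d * L (t * s)"
    and t: "t > 0" and s: "s \<ge> 1"
  shows "K * (t * s) powr (-\<alpha>) * L (t * s) \<le> A * s powr (-(\<alpha> - d)) * (K * t powr (-\<alpha>) * L t)"
    and "K * t powr (-\<alpha>) * L t \<le> A * s powr (\<alpha> + d) * (K * (t * s) powr (-\<alpha>) * L (t * s))"
proof -
  have ts: "(t * s) powr (-\<alpha>) = t powr (-\<alpha>) * s powr (-\<alpha>)"
    using t s powr_mult[of t s "-\<alpha>"] by simp
  have "K * (t * s) powr (-\<alpha>) * L (t * s) \<le> K * (t * s) powr (-\<alpha>) * (A * s powr d * L t)"
    using up[OF t s] K by (intro mult_left_mono) auto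
  also have "\<dots> = A * (s powr d * s powr (-\<alpha>)) * (K * t powr (-\<alpha>) * L t)"
    unfolding ts by (simp add: ac_simps)
  finally show "K * (t * s) powr (-\<alpha>) * L (t * s) \<le> A * s powr (-(\<alpha> - d)) * (K * t powr (-\<alpha>) * L t)"
    by (simp add: powr_add[symmetric])
  have "K * t powr (-\<alpha>) * L t \<le> K * t powr (-\<alpha>) * (A * s powr d * L (t * s))"
    using down[OF t s] K by (intro mult_left_mono) auto
  also have "\<dots> = A * (s powr d * s powr \<alpha> * s powr (-\<alpha>)) * (K * t powr (-\<alpha>) * L (t * s))"
    using s by (simp add: powr_add[symmetric])
  also have "\<dots> = A * s powr (\<alpha> + d) * (K * (t * s) powr (-\<alpha>) * L (t * s))"
    unfolding ts by (simp add: powr_add ac_simps)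
  finally show "K * t powr (-\<alpha>) * L t \<le> A * s powr (\<alpha> + d) * (K * (t * s) powr (-\<alpha>) * L (t * s))" .
qed

lemma asymp_equiv_id_linear_bound:
  fixes F :: "real \<Rightarrow> real"
  assumes equiv: "F \<sim>[at_top] (\<lambda>t. t)" and pos: "\<And>t. t > 0 \<Longrightarrow> F t > 0"
  obtains B where "\<And>n::nat. n \<ge> 1 \<Longrightarrow> real n \<le> B * F (real n)"
proof -
  have "\<forall>\<^sub>F t in at_top. t \<noteq> 0 \<or> F t \<noteq> 0"
    using eventually_gt_at_top[of "0::real"] by eventually_elim auto
  then have "((\<lambda>t. t / F t) \<longlongrightarrow> 1) at_top"
    by (rule asymp_equivD_strong[OF asymp_equiv_symI[OF equiv]])
  then have "(\<lambda>n. real n / F (real n)) \<longlonglongrightarrow> 1"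
    using filterlim_real_sequentially by (rule filterlim_compose)
  then have "Bseq (\<lambda>n. real n / F (real n))"
    by (rule convergent_imp_Bseq[OF convergentI])
  then obtain B where B: "\<And>n. norm (real n / F (real n)) \<le> B"
    by (meson BseqE)
  have "real n \<le> B * F (real n)" if "n \<ge> 1" for n :: nat
  proof -
    have "real n / F (real n) \<le> B"
      using B[of n] abs_ge_self order_trans unfolding real_norm_def by blast
    then show ?thesis
      using pos[of "real n"] that by (simp add: pos_divide_le_eq)
  qed
  then show ?thesis
    using that by blast
qed

lemma asymptotic_inverse_tail_scaling:
  fixes L g :: "real \<Rightarrow> real"
  assumes g: "asymptotic_inverse (\<lambda>t. t powr \<alpha> / L t) g" and L_pos: "\<And>t. t > 0 \<Longrightarrow> L t > 0"
    and up: "\<And>t s. t > 0 \<Longrightarrow> s \<ge> 1 \<Longrightarrow>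
      K * (t * s) powr (-\<alpha>) * L (t * s) \<le> A * s powr (-\<beta>) * (K * t powr (-\<alpha>) * L t)"
    and "K \<ge> 0" "A \<ge> 0"
  obtains c where "c \<ge> 0" and "\<And>n lam. n \<ge> 1 \<Longrightarrow> lam \<ge> 1 \<Longrightarrow>
    real n * (K * (g n * lam) powr (-\<alpha>) * L (g n * lam)) \<le> c * lam powr (-\<beta>)"
proof -
  have g_pos: "t > 0 \<Longrightarrow> g t > 0" for t
    using g unfolding asymptotic_inverse_def by simp
  have equiv: "(\<lambda>t. g t powr \<alpha> / L (g t)) \<sim>[at_top] (\<lambda>t. t)"
    using g unfolding asymptotic_inverse_def by simp
  have F_pos: "g t powr \<alpha> / L (g t) > 0" if "t > 0" for t
    using g_pos[OF that] L_pos[OF g_pos[OF that]] by simp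
  then obtain B where B: "\<And>n::nat. n \<ge> 1 \<Longrightarrow> real n \<le> B * (g n powr \<alpha> / L (g n))"
    by (rule asymp_equiv_id_linear_bound[OF equiv]) blast+
  have "B \<ge> 0"
  proof -
    have "0 \<le> B * (g 1 powr \<alpha> / L (g 1))"
      using B[of 1] by simp
    then show ?thesis
      using F_pos[of 1] zero_le_mult_iff[of B "g 1 powr \<alpha> / L (g 1)"] by auto
  qed
  have scaled: "real n * (K * (g n * lam) powr (-\<alpha>) * L (g n * lam)) \<le> K * A * B * lam powr (-\<beta>)"
    if n: "n \<ge> 1" and lam: "lam \<ge> 1" for n :: nat and lam
  proof -
    have pos: "g n > 0" "L (g n) > 0"
      using g_pos L_pos n by auto
    have "real n * (g n powr (-\<alpha>) * L (g n)) \<le> B"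
      using B[OF n] pos by (simp add: powr_minus field_simps)
    then have "K * (real n * (g n powr (-\<alpha>) * L (g n))) \<le> K * B"
      using \<open>K \<ge> 0\<close> by (rule mult_left_mono)
    then have "real n * (K * g n powr (-\<alpha>) * L (g n)) \<le> K * B"
      by (simp add: ac_simps)
    have "real n * (K * (g n * lam) powr (-\<alpha>) * L (g n * lam))
        \<le> real n * (A * lam powr (-\<beta>) * (K * g n powr (-\<alpha>) * L (g n)))"
      using up[OF pos(1) lam] by (intro mult_left_mono) auto
    also have "\<dots> = A * lam powr (-\<beta>) * (real n * (K * g n powr (-\<alpha>) * L (g n)))"
      by (simp add: ac_simps)
    also have "\<dots> \<le> A * lam powr (-\<beta>) * (K * B)"
      using \<open>real n * (K * g n powr (-\<alpha>) * L (g n)) \<le> K * B\<close> \<open>A \<ge> 0\<close>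
      by (intro mult_left_mono) auto
    finally show ?thesis
      by (simp add: ac_simps)
  qed
  show ?thesis
  proof (rule that[of "K * A * B"])
    show "K * A * B \<ge> 0"
      using \<open>K \<ge> 0\<close> \<open>A \<ge> 0\<close> \<open>B \<ge> 0\<close> by simp
  qed (rule scaled)
qed

section \<open>Truncated moments of a regularly varying tail\<close>

lemma power_two_powr: "((2::real) ^ k) powr a = (2 powr a) ^ k"
  by (simp add: powr_realpow[symmetric] powr_powr powr_power mult.commute)

lemma sum_geometric_le:
  fixes r :: real
  assumes "0 \<le> r" "r < 1"
  shows "(\<Sum>k<N. r ^ k) \<le> 1 / (1 - r)"
  using sum_le_suminf[of "\<lambda>k. r ^ k" "{..<N}"] summable_geometric[of r] suminf_geometric[of r] assms
  by auto

lemma eventually_le_mult_power_two: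
  fixes T :: real
  assumes "T > 0"
  shows "\<forall>\<^sub>F N in sequentially. y \<le> T * 2 ^ N"
proof -
  obtain n where "y / T < 2 ^ n"
    using real_arch_pow[of 2 "y / T"] by auto
  then have "y / T \<le> 2 ^ N" if "N \<ge> n" for N
    using power_increasing[OF that, of "2::real"] by linarith
  then show ?thesis
    using assms by (auto simp: eventually_sequentially field_simps)
qed

lemma dyadic_upper_part_le:
  fixes T x :: real
  assumes "T > 0"
  shows "(if T < \<bar>x\<bar> \<and> \<bar>x\<bar> \<le> T * 2 ^ N then \<bar>x\<bar> else 0)
    \<le> (\<Sum>k<N. T * 2 ^ (k + 1) * of_bool (T * 2 ^ k \<le> \<bar>x\<bar>))"
proof (induction N)
  case (Suc N)
  have "(if T < \<bar>x\<bar> \<and> \<bar>x\<bar> \<le> T * 2 ^ Suc N then \<bar>x\<bar> else 0)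
      \<le> (if T < \<bar>x\<bar> \<and> \<bar>x\<bar> \<le> T * 2 ^ N then \<bar>x\<bar> else 0) + T * 2 ^ (N + 1) * of_bool (T * 2 ^ N \<le> \<bar>x\<bar>)"
    using assms by auto
  with Suc.IH show ?case
    by simp
qed simp

lemma dyadic_truncated_square_le:
  fixes T x :: real
  assumes "T > 0"
  shows "(if \<bar>x\<bar> \<le> T then x\<^sup>2 else 0)
    \<le> (\<Sum>k<N. T\<^sup>2 * (1/4) ^ k * of_bool (T / 2 ^ (k + 1) \<le> \<bar>x\<bar>)) + T\<^sup>2 * (1/4) ^ N"
proof -
  have square_le: "(if \<bar>x\<bar> \<le> T / 2 ^ N then x\<^sup>2 else 0) \<le> T\<^sup>2 * (1/4) ^ N" for N
  proof -
    have "(if \<bar>x\<bar> \<le> T / 2 ^ N then x\<^sup>2 else 0) \<le> (T / 2 ^ N)\<^sup>2"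
      using assms by (auto simp flip: abs_le_square_iff)
    also have "\<dots> = T\<^sup>2 * (1/4) ^ N"
        using power_mult_distrib[of "2::real" 2 N] by (simp add: power_divide power_one_over power2_eq_square)
    finally show ?thesis .
  qed
  have "(if \<bar>x\<bar> \<le> T then x\<^sup>2 else 0)
    \<le> (\<Sum>k<N. T\<^sup>2 * (1/4) ^ k * of_bool (T / 2 ^ (k + 1) \<le> \<bar>x\<bar>))
       + (if \<bar>x\<bar> \<le> T / 2 ^ N then x\<^sup>2 else 0)"
  proof (induction N)
    case (Suc N)
    have "(if \<bar>x\<bar> \<le> T / 2 ^ N then x\<^sup>2 else 0)
        \<le> T\<^sup>2 * (1/4) ^ N * of_bool (T / 2 ^ (N + 1) \<le> \<bar>x\<bar>) + (if \<bar>x\<bar> \<le> T / 2 ^ Suc N then x\<^sup>2 else 0)"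
      using square_le[of N] assms by (cases "\<bar>x\<bar> \<le> T / 2 ^ Suc N") auto
    with Suc.IH show ?case
      by simp
  qed simp
  with square_le[of N] show ?thesis
    by linarith
qed

lemma integrable_monotone_limit_le:
  fixes f :: "nat \<Rightarrow> 'a \<Rightarrow> real"
  assumes f: "\<And>N. integrable M (f N)"
    and mono: "\<And>x. x \<in> space M \<Longrightarrow> mono (\<lambda>N. f N x)"
    and lim: "\<And>x. x \<in> space M \<Longrightarrow> (\<lambda>N. f N x) \<longlonglongrightarrow> u x"
    and u: "u \<in> borel_measurable M"
    and bound: "\<And>N. integral\<^sup>L M (f N) \<le> B"
  shows "integrable M u" and "integral\<^sup>L M u \<le> B"
proof -
  have "incseq (\<lambda>N. integral\<^sup>L M (f N))"
    using f mono by (intro incseq_SucI integral_mono) (auto simp: mono_iff_le_Suc)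
  moreover have "bdd_above (range (\<lambda>N. integral\<^sup>L M (f N)))"
    using bound by (rule bdd_aboveI2)
  ultimately have ilim: "(\<lambda>N. integral\<^sup>L M (f N)) \<longlonglongrightarrow> (SUP N. integral\<^sup>L M (f N))"
    by (rule LIMSEQ_incseq_SUP[rotated])
  show "integrable M u"
    by (rule integrable_monotone_convergence[OF f _ _ ilim u]) (use mono lim in auto)
  have "integral\<^sup>L M u = (SUP N. integral\<^sup>L M (f N))"
    by (rule integral_monotone_convergence[OF f _ _ ilim u]) (use mono lim in auto)
  also have "\<dots> \<le> B"
    using bound by (rule cSUP_least[rotated]) simp
  finally show "integral\<^sup>L M u \<le> B" .
qed

lemma (in prob_space) expectation_of_bool:
  assumes [measurable]: "Measurable.pred M P"
  shows "expectation (\<lambda>x. of_bool (P x)) = prob {x \<in> space M. P x}"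
proof -
  have "(\<lambda>x. of_bool (P x) :: real) = indicator {x. P x}"
    by (auto simp: indicator_def)
  moreover have "{x. P x} \<inter> space M = {x \<in> space M. P x}"
    by auto
  ultimately show ?thesis
    by simp
qed

lemma (in prob_space) expectation_sum_of_bool:
  assumes "finite K" and [measurable]: "\<And>k. k \<in> K \<Longrightarrow> Measurable.pred M (P k)"
  shows "expectation (\<lambda>x. \<Sum>k\<in>K. c k * of_bool (P k x)) = (\<Sum>k\<in>K. c k * prob {x \<in> space M. P k x})"
  using assms(1)
  by (subst Bochner_Integration.integral_sum)
    (auto intro!: integrable_const_bound[where B=1] simp: expectation_of_bool)

text \<open>In the application \<open>\<phi> t = K t\<^sup>-\<^sup>\<alpha> L(t)\<close>, and \<open>tail_up\<close>, \<open>tail_down\<close> are Potter bounds with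
  exponents \<open>p = \<alpha> - d > 1\<close> and \<open>q = \<alpha> + d < 2\<close> for a small \<open>d > 0\<close>.\<close>

context prob_space
begin

context
  fixes X :: "'a \<Rightarrow> real" and \<phi> :: "real \<Rightarrow> real" and A p q :: real
  assumes X_meas[measurable]: "X \<in> borel_measurable M"
    and tail_le: "\<And>t. t > 0 \<Longrightarrow> prob {x \<in> space M. t \<le> \<bar>X x\<bar>} \<le> \<phi> t"
    and tail_up: "\<And>t s. t > 0 \<Longrightarrow> s \<ge> 1 \<Longrightarrow> \<phi> (t * s) \<le> A * s powr (-p) * \<phi> t"
    and tail_down: "\<And>t s. t > 0 \<Longrightarrow> s \<ge> 1 \<Longrightarrow> \<phi> t \<le> A * s powr q * \<phi> (t * s)"
    and A: "A \<ge> 0" and p: "1 < p" and q: "q < 2"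
begin

lemma regular_tail_nonneg: "t > 0 \<Longrightarrow> \<phi> t \<ge> 0"
  using tail_le[of t] measure_nonneg[of M] by (meson order_trans)

lemma upper_dyadic_term_le:
  assumes T: "T > 0"
  shows "T * 2 ^ (k + 1) * prob {x \<in> space M. T * 2 ^ k \<le> \<bar>X x\<bar>}
    \<le> 2 * A * T * \<phi> T * (2 powr (1 - p)) ^ k"
proof -
  have "prob {x \<in> space M. T * 2 ^ k \<le> \<bar>X x\<bar>} \<le> A * (2 ^ k) powr (-p) * \<phi> T"
    using tail_le[of "T * 2 ^ k"] tail_up[OF T, of "2 ^ k"] T by simp
  then have "T * 2 ^ (k + 1) * prob {x \<in> space M. T * 2 ^ k \<le> \<bar>X x\<bar>}
      \<le> T * 2 ^ (k + 1) * (A * (2 ^ k) powr (-p) * \<phi> T)"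
    using T by (intro mult_left_mono) auto
  also have "\<dots> = 2 * A * T * \<phi> T * (2 ^ k * (2 powr (-p)) ^ k)"
    by (simp add: power_two_powr)
  also have "2 ^ k * (2 powr (-p)) ^ k = (2 powr (1 - p)) ^ k"
    by (simp add: powr_diff power_mult_distrib[symmetric] powr_minus field_simps)
  finally show ?thesis .
qed

lemma dyadic_upper_tail_moment_bound:
  assumes T: "T > 0"
  shows "expectation (\<lambda>x. if T < \<bar>X x\<bar> \<and> \<bar>X x\<bar> \<le> T * 2 ^ N then \<bar>X x\<bar> else 0)
    \<le> 2 * A / (1 - 2 powr (1 - p)) * T * \<phi> T"
proof -
  define r where "r = (2::real) powr (1 - p)"
  have r: "0 \<le> r" "r < 1"
    using p by (auto simp: r_def powr_less_one)
  have "expectation (\<lambda>x. if T < \<bar>X x\<bar> \<and> \<bar>X x\<bar> \<le> T * 2 ^ N then \<bar>X x\<bar> else 0)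
      \<le> expectation (\<lambda>x. \<Sum>k<N. T * 2 ^ (k + 1) * of_bool (T * 2 ^ k \<le> \<bar>X x\<bar>))"
  proof (rule integral_mono)
    show "integrable M (\<lambda>x. if T < \<bar>X x\<bar> \<and> \<bar>X x\<bar> \<le> T * 2 ^ N then \<bar>X x\<bar> else 0)"
      by (rule integrable_const_bound[where B="T * 2 ^ N"]) (use T in auto)
    show "integrable M (\<lambda>x. \<Sum>k<N. T * 2 ^ (k + 1) * of_bool (T * 2 ^ k \<le> \<bar>X x\<bar>))"
      by (intro Bochner_Integration.integrable_sum Bochner_Integration.integrable_mult_right
          integrable_const_bound[where B=1]) auto
  qed (rule dyadic_upper_part_le[OF T])
  also have "\<dots> = (\<Sum>k<N. T * 2 ^ (k + 1) * prob {x \<in> space M. T * 2 ^ k \<le> \<bar>X x\<bar>})"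
    by (rule expectation_sum_of_bool) auto
  also have "\<dots> \<le> (\<Sum>k<N. 2 * A * T * \<phi> T * r ^ k)"
    unfolding r_def by (intro sum_mono upper_dyadic_term_le T)
  also have "\<dots> = 2 * A * T * \<phi> T * (\<Sum>k<N. r ^ k)"
    by (simp add: sum_distrib_left)
  also have "\<dots> \<le> 2 * A * T * \<phi> T * (1 / (1 - r))"
    using A T regular_tail_nonneg[OF T] by (intro mult_left_mono sum_geometric_le r) auto
  finally show ?thesis
    by (simp add: r_def)
qed

lemma upper_tail_moment_bound:
  assumes T: "T > 0"
  shows "integrable M (\<lambda>x. if T < \<bar>X x\<bar> then \<bar>X x\<bar> else 0)"
    and "expectation (\<lambda>x. if T < \<bar>X x\<bar> then \<bar>X x\<bar> else 0)
      \<le> 2 * A / (1 - 2 powr (1 - p)) * T * \<phi> T"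
proof -
  define f where "f N x = (if T < \<bar>X x\<bar> \<and> \<bar>X x\<bar> \<le> T * 2 ^ N then \<bar>X x\<bar> else 0)" for N x
  have f_int: "integrable M (f N)" for N
    unfolding f_def by (rule integrable_const_bound[where B="T * 2 ^ N"]) (use T in auto)
  have f_mono: "mono (\<lambda>N. f N x)" for x
  proof (rule monoI)
    fix N N' :: nat
    assume "N \<le> N'"
    then have "T * 2 ^ N \<le> T * 2 ^ N'"
      using T by simp
    then show "f N x \<le> f N' x"
      by (auto simp: f_def)
  qed
  have f_lim: "(\<lambda>N. f N x) \<longlonglongrightarrow> (if T < \<bar>X x\<bar> then \<bar>X x\<bar> else 0)" for x
  proof (rule tendsto_eventually)
    show "\<forall>\<^sub>F N in sequentially. f N x = (if T < \<bar>X x\<bar> then \<bar>X x\<bar> else 0)"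
      using eventually_le_mult_power_two[OF T, of "\<bar>X x\<bar>"] by eventually_elim (simp add: f_def)
  qed
  have f_bound: "expectation (f N) \<le> 2 * A / (1 - 2 powr (1 - p)) * T * \<phi> T" for N
    unfolding f_def by (rule dyadic_upper_tail_moment_bound[OF T])
  show "integrable M (\<lambda>x. if T < \<bar>X x\<bar> then \<bar>X x\<bar> else 0)"
    by (rule integrable_monotone_limit_le(1)[OF f_int f_mono f_lim _ f_bound]) measurable
  show "expectation (\<lambda>x. if T < \<bar>X x\<bar> then \<bar>X x\<bar> else 0)
      \<le> 2 * A / (1 - 2 powr (1 - p)) * T * \<phi> T"
    by (rule integrable_monotone_limit_le(2)[OF f_int f_mono f_lim _ f_bound]) measurable
qed

lemma integrable_regular_tail: "integrable M X"
proof -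
  have "integrable M (\<lambda>x. 1 + (if 1 < \<bar>X x\<bar> then \<bar>X x\<bar> else 0))"
    using upper_tail_moment_bound(1)[of 1] by simp
  then show ?thesis
    by (rule Bochner_Integration.integrable_bound) auto
qed

lemma lower_dyadic_term_le:
  assumes T: "T > 0"
  shows "T\<^sup>2 * (1/4) ^ k * prob {x \<in> space M. T / 2 ^ (k + 1) \<le> \<bar>X x\<bar>}
    \<le> A * 2 powr q * T\<^sup>2 * \<phi> T * (2 powr (q - 2)) ^ k"
proof -
  have "prob {x \<in> space M. T / 2 ^ (k + 1) \<le> \<bar>X x\<bar>} \<le> A * (2 ^ (k + 1)) powr q * \<phi> T"
    using tail_le[of "T / 2 ^ (k + 1)"] tail_down[of "T / 2 ^ (k + 1)" "2 ^ (k + 1)"] T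
      one_le_power[of "2::real" "k + 1"] by simp
  then have "T\<^sup>2 * (1/4) ^ k * prob {x \<in> space M. T / 2 ^ (k + 1) \<le> \<bar>X x\<bar>}
      \<le> T\<^sup>2 * (1/4) ^ k * (A * (2 ^ (k + 1)) powr q * \<phi> T)"
    by (intro mult_left_mono) auto
  also have "\<dots> = A * 2 powr q * T\<^sup>2 * \<phi> T * ((1/4) ^ k * (2 powr q) ^ k)"
    by (subst power_two_powr) (simp add: algebra_simps)
  also have "(1/4) ^ k * (2 powr q) ^ k = (2 powr (q - 2)) ^ k"
    by (simp add: powr_diff power_mult_distrib[symmetric])
  finally show ?thesis .
qed

lemma dyadic_second_moment_bound:
  assumes T: "T > 0"
  shows "expectation (\<lambda>x. if \<bar>X x\<bar> \<le> T then (X x)\<^sup>2 else 0)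
    \<le> A * 2 powr q / (1 - 2 powr (q - 2)) * T\<^sup>2 * \<phi> T + T\<^sup>2 * (1/4) ^ N"
proof -
  define r where "r = (2::real) powr (q - 2)"
  have r: "0 \<le> r" "r < 1"
    using q by (auto simp: r_def powr_less_one)
  have "expectation (\<lambda>x. if \<bar>X x\<bar> \<le> T then (X x)\<^sup>2 else 0)
      \<le> expectation (\<lambda>x. (\<Sum>k<N. T\<^sup>2 * (1/4) ^ k * of_bool (T / 2 ^ (k + 1) \<le> \<bar>X x\<bar>))
        + T\<^sup>2 * (1/4) ^ N)"
  proof (rule integral_mono)
    show "integrable M (\<lambda>x. if \<bar>X x\<bar> \<le> T then (X x)\<^sup>2 else 0)"
      by (rule integrable_const_bound[where B="T\<^sup>2"])
        (use T in \<open>auto simp flip: abs_le_square_iff\<close>)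
    show "integrable M (\<lambda>x. (\<Sum>k<N. T\<^sup>2 * (1/4) ^ k * of_bool (T / 2 ^ (k + 1) \<le> \<bar>X x\<bar>))
        + T\<^sup>2 * (1/4) ^ N)"
      by (intro Bochner_Integration.integrable_add Bochner_Integration.integrable_sum
          Bochner_Integration.integrable_mult_right integrable_const_bound[where B=1])
        (auto intro: power_le_one)
  qed (rule dyadic_truncated_square_le[OF T])
  also have "\<dots> = (\<Sum>k<N. T\<^sup>2 * (1/4) ^ k * prob {x \<in> space M. T / 2 ^ (k + 1) \<le> \<bar>X x\<bar>})
      + T\<^sup>2 * (1/4) ^ N"
    by (subst Bochner_Integration.integral_add)
      (auto intro!: Bochner_Integration.integrable_sum Bochner_Integration.integrable_mult_right
        integrable_const_bound[where B=1] simp: expectation_sum_of_bool prob_space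
        simp del: sum_mult_of_bool_eq)
  also have "\<dots> \<le> (\<Sum>k<N. A * 2 powr q * T\<^sup>2 * \<phi> T * r ^ k) + T\<^sup>2 * (1/4) ^ N"
    unfolding r_def by (intro add_right_mono sum_mono lower_dyadic_term_le T)
  also have "\<dots> = A * 2 powr q * T\<^sup>2 * \<phi> T * (\<Sum>k<N. r ^ k) + T\<^sup>2 * (1/4) ^ N"
    by (simp add: sum_distrib_left)
  also have "\<dots> \<le> A * 2 powr q * T\<^sup>2 * \<phi> T * (1 / (1 - r)) + T\<^sup>2 * (1/4) ^ N"
    using A T regular_tail_nonneg[OF T]
    by (intro add_right_mono mult_left_mono sum_geometric_le r) auto
  finally show ?thesis
    by (simp add: r_def)
qed

lemma truncated_second_moment_bound:
  assumes T: "T > 0"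
  shows "expectation (\<lambda>x. if \<bar>X x\<bar> \<le> T then (X x)\<^sup>2 else 0)
    \<le> A * 2 powr q / (1 - 2 powr (q - 2)) * T\<^sup>2 * \<phi> T"
proof -
  define D where "D = A * 2 powr q / (1 - 2 powr (q - 2)) * T\<^sup>2 * \<phi> T"
  have "(\<lambda>N. D + T\<^sup>2 * (1/4) ^ N) \<longlonglongrightarrow> D + T\<^sup>2 * 0"
    by (intro tendsto_intros) simp
  then have "expectation (\<lambda>x. if \<bar>X x\<bar> \<le> T then (X x)\<^sup>2 else 0) \<le> D + T\<^sup>2 * 0"
    by (rule LIMSEQ_le_const) (use dyadic_second_moment_bound[OF T] in \<open>auto simp: D_def\<close>)
  then show ?thesis
    by (simp add: D_def)
qed

end

end

section \<open>Truncated Chebyshev bound for independent sums\<close>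

lemma (in finite_measure) integrable_bounded_real:
  fixes f :: "'a \<Rightarrow> real"
  assumes "f \<in> borel_measurable M" and "\<And>x. x \<in> space M \<Longrightarrow> \<bar>f x\<bar> \<le> B"
  shows "integrable M f"
  using assms by (intro integrable_const_bound[where B=B] AE_I2) auto

context prob_space
begin

lemma indep_shifted_product_le:
  fixes Y :: "'i \<Rightarrow> 'a \<Rightarrow> real" and c :: "'i \<Rightarrow> real"
  assumes indep: "indep_vars (\<lambda>_. borel) Y I"
    and bounded: "\<And>i x. i \<in> I \<Longrightarrow> x \<in> space M \<Longrightarrow> \<bar>Y i x\<bar> \<le> B"
    and i: "i \<in> I" and j: "j \<in> I"
  shows "integrable M (\<lambda>x. (Y i x - c i) * (Y j x - c j))"
    and "expectation (\<lambda>x. (Y i x - c i) * (Y j x - c j))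
      \<le> (if i = j then expectation (\<lambda>x. (Y i x)\<^sup>2) else 0)
        + \<bar>expectation (Y i) - c i\<bar> * \<bar>expectation (Y j) - c j\<bar>"
proof -
  have Y_meas: "Y k \<in> borel_measurable M" if "k \<in> I" for k
    using indep that unfolding indep_vars_def by auto
  note [measurable] = Y_meas[OF i] Y_meas[OF j]
  have Y_int: "integrable M (Y k)" if "k \<in> I" for k
    using integrable_bounded_real[OF Y_meas[OF that] bounded[OF that]] .
  have YY_int: "integrable M (\<lambda>x. (Y i x)\<^sup>2)"
  proof (rule integrable_bounded_real)
    show "\<bar>(Y i x)\<^sup>2\<bar> \<le> B\<^sup>2" if "x \<in> space M" for x
      using power_mono[OF bounded[OF i that] abs_ge_zero, of 2] by simp
  qed measurable
  show "integrable M (\<lambda>x. (Y i x - c i) * (Y j x - c j))"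
  proof (rule integrable_bounded_real)
    show "\<bar>(Y i x - c i) * (Y j x - c j)\<bar> \<le> (B + \<bar>c i\<bar>) * (B + \<bar>c j\<bar>)" if "x \<in> space M" for x
      using bounded[OF i that] bounded[OF j that]
      by (simp add: abs_mult mult_mono' order_trans[OF abs_triangle_ineq4] add_mono)
  qed measurable
  show "expectation (\<lambda>x. (Y i x - c i) * (Y j x - c j))
      \<le> (if i = j then expectation (\<lambda>x. (Y i x)\<^sup>2) else 0)
        + \<bar>expectation (Y i) - c i\<bar> * \<bar>expectation (Y j) - c j\<bar>"
  proof (cases "i = j")
    case True
    have "expectation (\<lambda>x. (Y i x - c i) * (Y i x - c i))
        = expectation (\<lambda>x. (Y i x)\<^sup>2) + (expectation (Y i) - c i)\<^sup>2 - (expectation (Y i))\<^sup>2"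
      using YY_int Y_int[OF i] by (simp add: power2_eq_square algebra_simps prob_space)
    then show ?thesis
      using True by (simp add: power2_eq_square abs_mult[symmetric])
  next
    case False
    have "indep_vars (\<lambda>_. borel) (\<lambda>k x. Y k x - c k) I"
      by (rule indep_vars_compose2[OF indep]) measurable
    then have "indep_vars (\<lambda>_. borel) (\<lambda>k x. Y k x - c k) {i, j}"
      by (rule indep_vars_subset) (use i j in auto)
    then have "expectation (\<lambda>x. \<Prod>k\<in>{i, j}. Y k x - c k) = (\<Prod>k\<in>{i, j}. expectation (\<lambda>x. Y k x - c k))"
      by (rule indep_vars_lebesgue_integral[rotated]) (use i j Y_int in auto)
    then have "expectation (\<lambda>x. (Y i x - c i) * (Y j x - c j))
        = (expectation (Y i) - c i) * (expectation (Y j) - c j)"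
      using False i j Y_int by (simp add: prob_space)
    then show ?thesis
      using False by (simp add: abs_mult[symmetric])
  qed
qed

lemma second_moment_sum_indep_le:
  fixes Y :: "'i \<Rightarrow> 'a \<Rightarrow> real" and c :: "'i \<Rightarrow> real"
  assumes I: "finite I" and indep: "indep_vars (\<lambda>_. borel) Y I"
    and bounded: "\<And>i x. i \<in> I \<Longrightarrow> x \<in> space M \<Longrightarrow> \<bar>Y i x\<bar> \<le> B"
  shows "expectation (\<lambda>x. (\<Sum>i\<in>I. Y i x - c i)\<^sup>2)
    \<le> (\<Sum>i\<in>I. expectation (\<lambda>x. (Y i x)\<^sup>2)) + (\<Sum>i\<in>I. \<bar>expectation (Y i) - c i\<bar>)\<^sup>2"
proof -
  note pair = indep_shifted_product_le[where c=c, OF indep bounded]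
  have "expectation (\<lambda>x. (\<Sum>i\<in>I. Y i x - c i)\<^sup>2)
      = (\<Sum>i\<in>I. \<Sum>j\<in>I. expectation (\<lambda>x. (Y i x - c i) * (Y j x - c j)))"
    using I pair(1)
    by (simp add: power2_eq_square sum_product Bochner_Integration.integral_sum
        Bochner_Integration.integrable_sum)
  also have "\<dots> \<le> (\<Sum>i\<in>I. \<Sum>j\<in>I. (if i = j then expectation (\<lambda>x. (Y i x)\<^sup>2) else 0)
      + \<bar>expectation (Y i) - c i\<bar> * \<bar>expectation (Y j) - c j\<bar>)"
    by (intro sum_mono pair(2))
  also have "\<dots> = (\<Sum>i\<in>I. expectation (\<lambda>x. (Y i x)\<^sup>2)) + (\<Sum>i\<in>I. \<bar>expectation (Y i) - c i\<bar>)\<^sup>2"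
    using I by (simp add: sum.distrib power2_eq_square sum_product)
  finally show ?thesis .
qed

lemma truncated_sum_second_moment_le:
  fixes \<xi> :: "'i \<Rightarrow> 'a \<Rightarrow> real" and E\<^sub>1 E\<^sub>2 :: real
  assumes I: "finite I" and indep: "indep_vars (\<lambda>_. borel) \<xi> I"
    and int: "\<And>i. i \<in> I \<Longrightarrow> integrable M (\<xi> i)" and T: "T > 0"
    and upper: "\<And>i. i \<in> I \<Longrightarrow> expectation (\<lambda>x. if T < \<bar>\<xi> i x\<bar> then \<bar>\<xi> i x\<bar> else 0) \<le> E\<^sub>1"
    and lower: "\<And>i. i \<in> I \<Longrightarrow> expectation (\<lambda>x. if \<bar>\<xi> i x\<bar> \<le> T then (\<xi> i x)\<^sup>2 else 0) \<le> E\<^sub>2"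
  shows "expectation (\<lambda>x. (\<Sum>i\<in>I. (if \<bar>\<xi> i x\<bar> \<le> T then \<xi> i x else 0) - expectation (\<xi> i))\<^sup>2)
    \<le> card I * E\<^sub>2 + (card I * E\<^sub>1)\<^sup>2"
proof -
  define Y where "Y i x = (if \<bar>\<xi> i x\<bar> \<le> T then \<xi> i x else 0)" for i x
  have indep_Y: "indep_vars (\<lambda>_. borel) Y I"
    unfolding Y_def[abs_def]
    by (rule indep_vars_compose2[where Y="\<lambda>_ y. if \<bar>y\<bar> \<le> T then y else 0", OF indep]) measurable
  have Y_bounded: "\<bar>Y i x\<bar> \<le> T" for i x
    using T by (simp add: Y_def)
  have second: "expectation (\<lambda>x. (Y i x)\<^sup>2) \<le> E\<^sub>2" if "i \<in> I" for i
  proof -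
    have "(\<lambda>x. (Y i x)\<^sup>2) = (\<lambda>x. if \<bar>\<xi> i x\<bar> \<le> T then (\<xi> i x)\<^sup>2 else 0)"
      by (auto simp: Y_def)
    then show ?thesis
      using lower[OF that] by simp
  qed
  have first: "\<bar>expectation (Y i) - expectation (\<xi> i)\<bar> \<le> E\<^sub>1" if "i \<in> I" for i
  proof -
    have "Y i \<in> borel_measurable M"
      using indep_Y that unfolding indep_vars_def by auto
    then have "integrable M (Y i)"
      by (rule integrable_bounded_real) (rule Y_bounded)
    then have "expectation (Y i) - expectation (\<xi> i) = expectation (\<lambda>x. Y i x - \<xi> i x)"
      using int[OF that] by (rule Bochner_Integration.integral_diff[symmetric])
    then have "\<bar>expectation (Y i) - expectation (\<xi> i)\<bar> \<le> expectation (\<lambda>x. \<bar>Y i x - \<xi> i x\<bar>)"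
      using integral_abs_bound by metis
    also have "(\<lambda>x. \<bar>Y i x - \<xi> i x\<bar>) = (\<lambda>x. if T < \<bar>\<xi> i x\<bar> then \<bar>\<xi> i x\<bar> else 0)"
      by (auto simp: Y_def)
    finally show ?thesis
      using upper[OF that] by simp
  qed
  have "(\<Sum>i\<in>I. expectation (\<lambda>x. (Y i x)\<^sup>2)) \<le> card I * E\<^sub>2"
    using sum_mono[of I _ "\<lambda>_. E\<^sub>2", OF second] by simp
  moreover have "(\<Sum>i\<in>I. \<bar>expectation (Y i) - expectation (\<xi> i)\<bar>)\<^sup>2 \<le> (card I * E\<^sub>1)\<^sup>2"
    using sum_mono[of I _ "\<lambda>_. E\<^sub>1", OF first] by (intro power_mono) (auto intro: sum_nonneg)
  ultimately show ?thesis
    using second_moment_sum_indep_le[OF I indep_Y Y_bounded, of "\<lambda>i. expectation (\<xi> i)"]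
    unfolding Y_def by linarith
qed

lemma truncated_sum_deviation_bound:
  fixes \<xi> :: "'i \<Rightarrow> 'a \<Rightarrow> real" and P E\<^sub>1 E\<^sub>2 :: real
  assumes I: "finite I" and indep: "indep_vars (\<lambda>_. borel) \<xi> I"
    and int: "\<And>i. i \<in> I \<Longrightarrow> integrable M (\<xi> i)" and T: "T > 0"
    and tail: "\<And>i. i \<in> I \<Longrightarrow> prob {x \<in> space M. T \<le> \<bar>\<xi> i x\<bar>} \<le> P"
    and upper: "\<And>i. i \<in> I \<Longrightarrow> expectation (\<lambda>x. if T < \<bar>\<xi> i x\<bar> then \<bar>\<xi> i x\<bar> else 0) \<le> E\<^sub>1"
    and lower: "\<And>i. i \<in> I \<Longrightarrow> expectation (\<lambda>x. if \<bar>\<xi> i x\<bar> \<le> T then (\<xi> i x)\<^sup>2 else 0) \<le> E\<^sub>2"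
  shows "prob {x \<in> space M. T < \<bar>\<Sum>i\<in>I. \<xi> i x - expectation (\<xi> i)\<bar>}
    \<le> card I * P + (card I * E\<^sub>2 + (card I * E\<^sub>1)\<^sup>2) / T\<^sup>2"
proof -
  define Z where "Z x = (\<Sum>i\<in>I. (if \<bar>\<xi> i x\<bar> \<le> T then \<xi> i x else 0) - expectation (\<xi> i))" for x
  have \<xi>_meas: "\<xi> i \<in> borel_measurable M" if "i \<in> I" for i
    using indep that unfolding indep_vars_def by auto
  have Z_meas[measurable]: "Z \<in> borel_measurable M"
    unfolding Z_def using \<xi>_meas by (intro borel_measurable_sum borel_measurable_diff) auto
  have tail_event: "{x \<in> space M. T \<le> \<bar>\<xi> i x\<bar>} \<in> events" if "i \<in> I" for i
  proof -
    note [measurable] = \<xi>_meas[OF that]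
    show ?thesis
      by measurable
  qed
  have Z_event: "{x \<in> space M. T \<le> \<bar>Z x\<bar>} \<in> events"
    by measurable
  have "{x \<in> space M. T < \<bar>\<Sum>i\<in>I. \<xi> i x - expectation (\<xi> i)\<bar>}
      \<subseteq> (\<Union>i\<in>I. {x \<in> space M. T \<le> \<bar>\<xi> i x\<bar>}) \<union> {x \<in> space M. T \<le> \<bar>Z x\<bar>}"
  proof safe
    fix x assume "x \<in> space M" and big: "T < \<bar>\<Sum>i\<in>I. \<xi> i x - expectation (\<xi> i)\<bar>"
      and small: "x \<notin> (\<Union>i\<in>I. {x \<in> space M. T \<le> \<bar>\<xi> i x\<bar>})"
    have "Z x = (\<Sum>i\<in>I. \<xi> i x - expectation (\<xi> i))"
      unfolding Z_def using small \<open>x \<in> space M\<close> by (intro sum.cong) auto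
    then show "T \<le> \<bar>Z x\<bar>"
      using big by simp
  qed
  then have "prob {x \<in> space M. T < \<bar>\<Sum>i\<in>I. \<xi> i x - expectation (\<xi> i)\<bar>}
      \<le> prob ((\<Union>i\<in>I. {x \<in> space M. T \<le> \<bar>\<xi> i x\<bar>}) \<union> {x \<in> space M. T \<le> \<bar>Z x\<bar>})"
    using I by (intro finite_measure_mono) (auto intro!: sets.Un sets.finite_UN tail_event Z_event)
  also have "\<dots> \<le> (\<Sum>i\<in>I. prob {x \<in> space M. T \<le> \<bar>\<xi> i x\<bar>}) + prob {x \<in> space M. T \<le> \<bar>Z x\<bar>}"
    using tail_event I
    by (intro order_trans[OF measure_Un_le] add_right_mono finite_measure_subadditive_finite) auto
  also have "(\<Sum>i\<in>I. prob {x \<in> space M. T \<le> \<bar>\<xi> i x\<bar>}) \<le> card I * P"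
    using sum_mono[of I _ "\<lambda>_. P", OF tail] by simp
  also have "prob {x \<in> space M. T \<le> \<bar>Z x\<bar>} \<le> expectation (\<lambda>x. (Z x)\<^sup>2) / T\<^sup>2"
  proof (rule second_moment_method)
    have "\<bar>Z x\<bar> \<le> (\<Sum>i\<in>I. T + \<bar>expectation (\<xi> i)\<bar>)" for x
      unfolding Z_def using T
      by (intro order_trans[OF sum_abs] sum_mono order_trans[OF abs_triangle_ineq4] add_mono) auto
    then have "\<bar>(Z x)\<^sup>2\<bar> \<le> (\<Sum>i\<in>I. T + \<bar>expectation (\<xi> i)\<bar>)\<^sup>2" for x
      using power_mono[of "\<bar>Z x\<bar>" _ 2] by simp
    then show "integrable M (\<lambda>x. (Z x)\<^sup>2)"
      by (intro integrable_bounded_real) (measurable, blast)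
  qed (use T in simp_all)
  also have "expectation (\<lambda>x. (Z x)\<^sup>2) \<le> card I * E\<^sub>2 + (card I * E\<^sub>1)\<^sup>2"
    unfolding Z_def by (rule truncated_sum_second_moment_le[OF I indep int T upper lower])
  finally show ?thesis
    using T by (simp add: divide_right_mono)
qed

lemma normalized_deviation_bound:
  fixes \<xi> :: "nat \<Rightarrow> 'a \<Rightarrow> real" and \<phi> :: "real \<Rightarrow> real" and a :: "nat \<Rightarrow> real"
  assumes indep: "indep_vars (\<lambda>_. borel) \<xi> {1..}"
    and int: "\<And>i. i \<ge> 1 \<Longrightarrow> integrable M (\<xi> i)"
    and tail: "\<And>i t. i \<ge> 1 \<Longrightarrow> t > 0 \<Longrightarrow> prob {x \<in> space M. t \<le> \<bar>\<xi> i x\<bar>} \<le> \<phi> t"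
    and upper: "\<And>i T. i \<ge> 1 \<Longrightarrow> T > 0 \<Longrightarrow>
      expectation (\<lambda>x. if T < \<bar>\<xi> i x\<bar> then \<bar>\<xi> i x\<bar> else 0) \<le> D\<^sub>1 * T * \<phi> T"
    and lower: "\<And>i T. i \<ge> 1 \<Longrightarrow> T > 0 \<Longrightarrow>
      expectation (\<lambda>x. if \<bar>\<xi> i x\<bar> \<le> T then (\<xi> i x)\<^sup>2 else 0) \<le> D\<^sub>2 * T\<^sup>2 * \<phi> T"
    and scale: "real n * \<phi> (a n * lam) \<le> c * lam powr (-\<beta>)"
    and a: "a n > 0" and \<beta>: "\<beta> \<ge> 0" and D\<^sub>2: "D\<^sub>2 \<ge> 0" and n: "n \<ge> 1" and lam: "lam \<ge> 1"
  shows "prob {x \<in> space M. lam < \<bar>\<Sum>i=1..n. (\<xi> i x - expectation (\<xi> i)) / a n\<bar>}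
    \<le> c * (1 + D\<^sub>2 + D\<^sub>1\<^sup>2 * c) * lam powr (-\<beta>)"
proof -
  define T where "T = a n * lam"
  define Q where "Q = real n * \<phi> T"
  have T: "T > 0"
    using a lam by (simp add: T_def)
  have "0 \<le> \<phi> T"
    using tail[of 1 T] T measure_nonneg[of M] by (meson order_trans le_numeral_extra(4))
  then have "0 \<le> Q"
    by (simp add: Q_def)
  moreover have Q_le: "Q \<le> c * lam powr (-\<beta>)"
    using scale by (simp add: Q_def T_def)
  moreover have "lam powr (-\<beta>) \<le> 1"
    using powr_mono[of "-\<beta>" 0 lam] \<beta> lam by simp
  moreover have "0 \<le> c"
  proof -
    have "0 \<le> c * lam powr (-\<beta>)"
      using \<open>0 \<le> Q\<close> Q_le by linarith
    then show ?thesis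
      using lam by (simp add: zero_le_mult_iff)
  qed
  ultimately have "Q \<le> c"
    using mult_left_le[of "lam powr (-\<beta>)" c] by linarith
  have "{x \<in> space M. lam < \<bar>\<Sum>i=1..n. (\<xi> i x - expectation (\<xi> i)) / a n\<bar>}
      = {x \<in> space M. T < \<bar>\<Sum>i\<in>{1..n}. \<xi> i x - expectation (\<xi> i)\<bar>}"
    using a by (auto simp: T_def abs_divide pos_less_divide_eq mult.commute simp flip: sum_divide_distrib)
  also have "prob \<dots> \<le> card {1..n} * \<phi> T
      + (card {1..n} * (D\<^sub>2 * T\<^sup>2 * \<phi> T) + (card {1..n} * (D\<^sub>1 * T * \<phi> T))\<^sup>2) / T\<^sup>2"
    by (rule truncated_sum_deviation_bound)
      (use indep_vars_subset[OF indep] int tail upper lower T in auto)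
  also have "\<dots> = Q + D\<^sub>2 * Q + D\<^sub>1\<^sup>2 * (Q * Q)"
    using T by (simp add: Q_def field_simps power2_eq_square)
  also have "\<dots> \<le> c * lam powr (-\<beta>) + D\<^sub>2 * (c * lam powr (-\<beta>)) + D\<^sub>1\<^sup>2 * (c * (c * lam powr (-\<beta>)))"
    using Q_le \<open>Q \<le> c\<close> \<open>0 \<le> Q\<close> D\<^sub>2 by (intro add_mono mult_left_mono mult_mono) auto
  finally show ?thesis
    by (simp add: algebra_simps)
qed

end

context prob_space
begin

lemma prob_eq_of_distr_eq:
  fixes X Y :: "'a \<Rightarrow> real"
  assumes "distr M borel X = distr M borel Y" "X \<in> borel_measurable M" "Y \<in> borel_measurable M"
    and "S \<in> sets borel"
  shows "prob (X -` S \<inter> space M) = prob (Y -` S \<inter> space M)"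
  using measure_distr[where M=M and f=X and N=borel and S=S]
    measure_distr[where M=M and f=Y and N=borel and S=S] assms
  by simp

lemma expectation_eq_of_distr_eq:
  fixes X Y :: "'a \<Rightarrow> real"
  assumes "distr M borel X = distr M borel Y" "X \<in> borel_measurable M" "Y \<in> borel_measurable M"
  shows "expectation X = expectation Y"
  using integral_distr[where M=M and g=X and N=borel and f="\<lambda>y. y"]
    integral_distr[where M=M and g=Y and N=borel and f="\<lambda>y. y"] assms by simp

lemma identically_distributed_tail_bound:
  fixes \<xi> :: "nat \<Rightarrow> 'a \<Rightarrow> real"
  assumes L: "slowly_varying L" "locally_bounded_away L" and \<alpha>: "\<alpha> \<ge> 0"
    and meas: "\<And>i. i \<ge> 1 \<Longrightarrow> \<xi> i \<in> borel_measurable M"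
    and ident: "\<And>i. i \<ge> 1 \<Longrightarrow> distr M borel (\<xi> i) = distr M borel (\<xi> 1)"
    and tail: "\<And>t. t \<ge> 1 \<Longrightarrow> prob {x \<in> space M. t \<le> \<bar>\<xi> 1 x\<bar>} \<le> t powr (-\<alpha>) * L t"
  obtains K where "K \<ge> 0"
    and "\<And>i t. i \<ge> 1 \<Longrightarrow> t > 0 \<Longrightarrow> prob {x \<in> space M. t \<le> \<bar>\<xi> i x\<bar>} \<le> K * t powr (-\<alpha>) * L t"
proof -
  obtain K where "K \<ge> 0" and K: "\<And>t. t > 0 \<Longrightarrow> prob {x \<in> space M. t \<le> \<bar>\<xi> 1 x\<bar>} \<le> K * t powr (-\<alpha>) * L t"
    using tail_bound_all_positive[where P="\<lambda>t. prob {x \<in> space M. t \<le> \<bar>\<xi> 1 x\<bar>}",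
        OF L(2) slowly_varying_pos[OF L(1)] \<alpha> tail prob_le_1]
    by blast
  have same_tail: "prob {x \<in> space M. t \<le> \<bar>\<xi> i x\<bar>} = prob {x \<in> space M. t \<le> \<bar>\<xi> 1 x\<bar>}"
    if "i \<ge> 1" for i t
  proof -
    have "{x \<in> space M. t \<le> \<bar>\<xi> j x\<bar>} = \<xi> j -` {y. t \<le> \<bar>y\<bar>} \<inter> space M" for j
      by auto
    then show ?thesis
      using prob_eq_of_distr_eq[OF ident[OF that] meas[OF that] meas[of 1], of "{y. t \<le> \<bar>y\<bar>}"]
      by simp
  qed
  show ?thesis
  proof (rule that[OF \<open>K \<ge> 0\<close>])
    fix i :: nat and t :: real
    assume "i \<ge> 1" "t > 0"
    then show "prob {x \<in> space M. t \<le> \<bar>\<xi> i x\<bar>} \<le> K * t powr (-\<alpha>) * L t"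
      using K[of t] same_tail[of i t] by simp
  qed
qed

end

lemma tight_of_power_bound:
  fixes P :: "nat \<Rightarrow> real \<Rightarrow> real"
  assumes bound: "\<And>n lam. n \<ge> 1 \<Longrightarrow> lam \<ge> 1 \<Longrightarrow> P n lam \<le> C * lam powr (-\<rho>)" and "\<rho> > 0"
    and "\<epsilon> > 0"
  obtains K where "\<And>n. n \<ge> 1 \<Longrightarrow> P n K < \<epsilon>"
proof -
  have "((\<lambda>K. C * K powr (-\<rho>)) \<longlongrightarrow> C * 0) at_top"
    using \<open>\<rho> > 0\<close> by (intro tendsto_mult tendsto_const tendsto_neg_powr filterlim_ident) simp_all
  then have "\<forall>\<^sub>F K in at_top. C * K powr (-\<rho>) < \<epsilon>"
    using \<open>\<epsilon> > 0\<close> by (auto dest: order_tendstoD(2))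
  then have "\<forall>\<^sub>F K in at_top. C * K powr (-\<rho>) < \<epsilon> \<and> K \<ge> 1"
    using eventually_ge_at_top by (rule eventually_conj)
  then obtain K where "C * K powr (-\<rho>) < \<epsilon>" "K \<ge> 1"
    by (auto simp: eventually_at_top_linorder)
  then show ?thesis
    using bound that by (meson order_le_less_trans)
qed

context prob_space
begin

lemma identically_distributed_regular_tail:
  fixes \<xi> :: "nat \<Rightarrow> 'a \<Rightarrow> real" and L :: "real \<Rightarrow> real" and \<alpha> :: real
  assumes L: "slowly_varying L" "locally_bounded_away L" and "\<alpha> \<ge> 0" and d: "d > 0"
    and meas: "\<And>i. i \<ge> 1 \<Longrightarrow> \<xi> i \<in> borel_measurable M"
    and ident: "\<And>i. i \<ge> 1 \<Longrightarrow> distr M borel (\<xi> i) = distr M borel (\<xi> 1)"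
    and tail: "\<And>t. t \<ge> 1 \<Longrightarrow> prob {x \<in> space M. t \<le> \<bar>\<xi> 1 x\<bar>} \<le> t powr (-\<alpha>) * L t"
  obtains K A where "K \<ge> 0" and "A \<ge> 0"
    and "\<And>i t. i \<ge> 1 \<Longrightarrow> t > 0 \<Longrightarrow> prob {x \<in> space M. t \<le> \<bar>\<xi> i x\<bar>} \<le> K * t powr (-\<alpha>) * L t"
    and "\<And>t s. t > 0 \<Longrightarrow> s \<ge> 1 \<Longrightarrow>
      K * (t * s) powr (-\<alpha>) * L (t * s) \<le> A * s powr (-(\<alpha> - d)) * (K * t powr (-\<alpha>) * L t)"
    and "\<And>t s. t > 0 \<Longrightarrow> s \<ge> 1 \<Longrightarrow>
      K * t powr (-\<alpha>) * L t \<le> A * s powr (\<alpha> + d) * (K * (t * s) powr (-\<alpha>) * L (t * s))"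
proof -
  obtain K where "K \<ge> 0"
    and tail_i: "\<And>i t. i \<ge> 1 \<Longrightarrow> t > 0 \<Longrightarrow> prob {x \<in> space M. t \<le> \<bar>\<xi> i x\<bar>} \<le> K * t powr (-\<alpha>) * L t"
    by (rule identically_distributed_tail_bound[where \<xi>=\<xi>, OF L \<open>\<alpha> \<ge> 0\<close> meas ident tail]) blast+
  obtain A where "A > 0"
    and up: "\<And>t s. t > 0 \<Longrightarrow> s \<ge> 1 \<Longrightarrow> L (t * s) \<le> A * s powr d * L t"
    and down: "\<And>t s. t > 0 \<Longrightarrow> s \<ge> 1 \<Longrightarrow> L t \<le> A * s powr d * L (t * s)"
    by (rule potter_bound[OF L d]) blast+
  show ?thesis
  proof (rule that[OF \<open>K \<ge> 0\<close> less_imp_le[OF \<open>A > 0\<close>] tail_i])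
    fix t s :: real
    assume "t > 0" "s \<ge> 1"
    then show "K * (t * s) powr (-\<alpha>) * L (t * s) \<le> A * s powr (-(\<alpha> - d)) * (K * t powr (-\<alpha>) * L t)"
      and "K * t powr (-\<alpha>) * L t \<le> A * s powr (\<alpha> + d) * (K * (t * s) powr (-\<alpha>) * L (t * s))"
      using potter_bound_regular_variation[OF \<open>K \<ge> 0\<close> slowly_varying_pos[OF L(1)] up down] by simp_all
  qed
qed

lemma deviation_power_bound:
  fixes \<xi> :: "nat \<Rightarrow> 'a \<Rightarrow> real" and L g :: "real \<Rightarrow> real" and \<alpha> \<rho> :: real
  assumes \<alpha>: "1 < \<alpha>" "\<alpha> < 2" and L: "slowly_varying L" "locally_bounded_away L"
    and indep: "indep_vars (\<lambda>_. borel) \<xi> {1..}"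
    and ident: "\<And>i. i \<ge> 1 \<Longrightarrow> distr M borel (\<xi> i) = distr M borel (\<xi> 1)"
    and tail: "\<And>t. t \<ge> 1 \<Longrightarrow> prob {x \<in> space M. t \<le> \<bar>\<xi> 1 x\<bar>} \<le> t powr (-\<alpha>) * L t"
    and g: "asymptotic_inverse (\<lambda>t. t powr \<alpha> / L t) g" and \<rho>: "\<rho> < \<alpha>"
  shows "\<exists>C. \<forall>n\<ge>1. \<forall>lam\<ge>1.
    prob {x \<in> space M. lam < \<bar>\<Sum>i=1..n. (\<xi> i x - expectation (\<xi> i)) / g (real n)\<bar>}
      \<le> C * lam powr (-\<rho>)"
proof -
  have meas: "\<xi> i \<in> borel_measurable M" if "i \<ge> 1" for i
    using indep that unfolding indep_vars_def by auto
  define d where "d = min (\<alpha> - \<rho>) (min ((2 - \<alpha>) / 2) ((\<alpha> - 1) / 2))"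
  have d: "0 < d" "d \<le> \<alpha> - \<rho>" "1 < \<alpha> - d" "\<alpha> + d < 2"
    using \<alpha> \<rho> unfolding d_def by (auto simp: min_def field_simps)
  obtain K A where K: "K \<ge> 0" and A: "A \<ge> 0"
    and tail_i: "\<And>i t. i \<ge> 1 \<Longrightarrow> t > 0 \<Longrightarrow> prob {x \<in> space M. t \<le> \<bar>\<xi> i x\<bar>} \<le> K * t powr (-\<alpha>) * L t"
    and tail_up: "\<And>t s. t > 0 \<Longrightarrow> s \<ge> 1 \<Longrightarrow>
      K * (t * s) powr (-\<alpha>) * L (t * s) \<le> A * s powr (-(\<alpha> - d)) * (K * t powr (-\<alpha>) * L t)"
    and tail_down: "\<And>t s. t > 0 \<Longrightarrow> s \<ge> 1 \<Longrightarrow>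
      K * t powr (-\<alpha>) * L t \<le> A * s powr (\<alpha> + d) * (K * (t * s) powr (-\<alpha>) * L (t * s))"
    using identically_distributed_regular_tail[where \<xi>=\<xi>, OF L _ d(1) meas ident tail] \<alpha> by auto
  define D\<^sub>1 where "D\<^sub>1 = 2 * A / (1 - 2 powr (1 - (\<alpha> - d)))"
  define D\<^sub>2 where "D\<^sub>2 = A * 2 powr (\<alpha> + d) / (1 - 2 powr (\<alpha> + d - 2))"
  have "2 powr (\<alpha> + d - 2) < (1::real)"
    using d(4) by (simp add: powr_less_one)
  then have "D\<^sub>2 \<ge> 0"
    using A by (simp add: D\<^sub>2_def)
  have moments_i: "integrable M (\<xi> i)"
    "T > 0 \<Longrightarrow> expectation (\<lambda>x. if T < \<bar>\<xi> i x\<bar> then \<bar>\<xi> i x\<bar> else 0)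
      \<le> D\<^sub>1 * T * (K * T powr (-\<alpha>) * L T)"
    "T > 0 \<Longrightarrow> expectation (\<lambda>x. if \<bar>\<xi> i x\<bar> \<le> T then (\<xi> i x)\<^sup>2 else 0)
      \<le> D\<^sub>2 * T\<^sup>2 * (K * T powr (-\<alpha>) * L T)" if "i \<ge> 1" for i T
    using integrable_regular_tail[OF meas[OF that] tail_i[OF that] tail_up tail_down A d(3,4)]
      upper_tail_moment_bound(2)[OF meas[OF that] tail_i[OF that] tail_up tail_down A d(3,4)]
      truncated_second_moment_bound[OF meas[OF that] tail_i[OF that] tail_up tail_down A d(3,4)]
    by (simp_all add: D\<^sub>1_def D\<^sub>2_def)
  obtain c where "c \<ge> 0" and scale: "\<And>n lam. n \<ge> 1 \<Longrightarrow> lam \<ge> 1 \<Longrightarrow>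
      real n * (K * (g n * lam) powr (-\<alpha>) * L (g n * lam)) \<le> c * lam powr (-(\<alpha> - d))"
    by (rule asymptotic_inverse_tail_scaling[OF g slowly_varying_pos[OF L(1)] tail_up K A]) blast+
  show ?thesis
  proof (intro exI allI impI)
    fix n :: nat and lam :: real
    assume n: "n \<ge> 1" and lam: "lam \<ge> 1"
    have "prob {x \<in> space M. lam < \<bar>\<Sum>i=1..n. (\<xi> i x - expectation (\<xi> i)) / g (real n)\<bar>}
        \<le> c * (1 + D\<^sub>2 + D\<^sub>1\<^sup>2 * c) * lam powr (-(\<alpha> - d))"
      by (rule normalized_deviation_bound[where \<phi>="\<lambda>t. K * t powr (-\<alpha>) * L t", OF indep])
        (use moments_i tail_i scale[OF n lam] n lam d \<open>D\<^sub>2 \<ge> 0\<close> g in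
          \<open>auto simp: asymptotic_inverse_def\<close>)
    also have "\<dots> \<le> c * (1 + D\<^sub>2 + D\<^sub>1\<^sup>2 * c) * lam powr (-\<rho>)"
      using \<open>c \<ge> 0\<close> \<open>D\<^sub>2 \<ge> 0\<close> lam d(2) by (intro mult_left_mono powr_mono) auto
    finally show "prob {x \<in> space M. lam < \<bar>\<Sum>i=1..n. (\<xi> i x - expectation (\<xi> i)) / g (real n)\<bar>}
        \<le> c * (1 + D\<^sub>2 + D\<^sub>1\<^sup>2 * c) * lam powr (-\<rho>)" .
  qed
qed

lemma deviation_tight:
  fixes \<xi> :: "nat \<Rightarrow> 'a \<Rightarrow> real" and L g :: "real \<Rightarrow> real" and \<alpha> :: real
  assumes \<alpha>: "1 < \<alpha>" "\<alpha> < 2" and L: "slowly_varying L" "locally_bounded_away L"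
    and indep: "indep_vars (\<lambda>_. borel) \<xi> {1..}"
    and ident: "\<And>i. i \<ge> 1 \<Longrightarrow> distr M borel (\<xi> i) = distr M borel (\<xi> 1)"
    and tail: "\<And>t. t \<ge> 1 \<Longrightarrow> prob {x \<in> space M. t \<le> \<bar>\<xi> 1 x\<bar>} \<le> t powr (-\<alpha>) * L t"
    and g: "asymptotic_inverse (\<lambda>t. t powr \<alpha> / L t) g" and \<epsilon>: "\<epsilon> > 0"
  shows "\<exists>K. \<forall>n\<ge>1.
    prob {x \<in> space M. K < \<bar>(\<Sum>i=1..n. \<xi> i x) - real n * expectation (\<xi> 1)\<bar> / g (real n)} < \<epsilon>"
proof -
  have meas: "\<xi> i \<in> borel_measurable M" if "i \<ge> 1" for i
    using indep that unfolding indep_vars_def by auto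
  obtain C where C: "\<And>n lam. n \<ge> 1 \<Longrightarrow> lam \<ge> 1 \<Longrightarrow>
      prob {x \<in> space M. lam < \<bar>\<Sum>i=1..n. (\<xi> i x - expectation (\<xi> i)) / g (real n)\<bar>}
        \<le> C * lam powr (-1)"
    using deviation_power_bound[OF \<alpha> L indep ident tail g \<alpha>(1)] by blast
  obtain K where K: "\<And>n. n \<ge> 1 \<Longrightarrow>
      prob {x \<in> space M. K < \<bar>\<Sum>i=1..n. (\<xi> i x - expectation (\<xi> i)) / g (real n)\<bar>} < \<epsilon>"
    by (rule tight_of_power_bound[OF C zero_less_one \<epsilon>]) blast+
  have centred: "\<bar>\<Sum>i=1..n. (\<xi> i x - expectation (\<xi> i)) / g (real n)\<bar>
      = \<bar>(\<Sum>i=1..n. \<xi> i x) - real n * expectation (\<xi> 1)\<bar> / g (real n)" if "n \<ge> 1" for n x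
  proof -
    have "g (real n) > 0"
      using g that unfolding asymptotic_inverse_def by simp
    have "(\<Sum>i=1..n. expectation (\<xi> i)) = (\<Sum>i=1..n. expectation (\<xi> 1))"
    proof (rule sum.cong[OF refl])
      fix i assume "i \<in> {1..n}"
      then show "expectation (\<xi> i) = expectation (\<xi> 1)"
        using expectation_eq_of_distr_eq[OF ident meas meas[of 1], of i] by simp
    qed
    then have "(\<Sum>i=1..n. \<xi> i x - expectation (\<xi> i)) = (\<Sum>i=1..n. \<xi> i x) - real n * expectation (\<xi> 1)"
      by (simp add: sum_subtractf)
    with \<open>g (real n) > 0\<close> show ?thesis
      by (simp add: abs_divide flip: sum_divide_distrib)
  qed
  show ?thesis
  proof (intro exI allI impI)
    fix n :: nat
    assume "n \<ge> 1"
    then show "prob {x \<in> space M. K < \<bar>(\<Sum>i=1..n. \<xi> i x) - real n * expectation (\<xi> 1)\<bar> / g (real n)}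
        < \<epsilon>"
      using K[of n] centred[of n] by simp
  qed
qed

end

theorem proposition2p1:
  fixes M :: "'a measure" and \<xi> :: "nat \<Rightarrow> 'a \<Rightarrow> real"
    and L g :: "real \<Rightarrow> real" and \<alpha> :: real
  assumes "prob_space M"
    and "1 < \<alpha>" and "\<alpha> < 2"
    and "slowly_varying L" and "locally_bounded_away L"
    and "\<And>i. i \<ge> 1 \<Longrightarrow> \<xi> i \<in> borel_measurable M"
    and "prob_space.indep_vars M (\<lambda>_. borel) \<xi> {1..}"
    and "\<And>i. i \<ge> 1 \<Longrightarrow> distr M borel (\<xi> i) = distr M borel (\<xi> 1)"
    and "\<And>t. t \<ge> 1 \<Longrightarrow> measure M {x \<in> space M. \<bar>\<xi> 1 x\<bar> \<ge> t} \<le> t powr (-\<alpha>) * L t"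
    and "asymptotic_inverse (\<lambda>t. t powr \<alpha> / L t) g"
    and "mono_on {0<..} g"
  shows "(\<forall>\<rho><\<alpha>. \<exists>C::real. \<forall>n::nat\<ge>1. \<forall>lam::real\<ge>1.
            measure M {x \<in> space M.
              \<bar>\<Sum>i=1..n. (\<xi> i x - integral\<^sup>L M (\<xi> i)) / g (real n)\<bar> > lam}
            \<le> C * lam powr (-\<rho>))
       \<and> (\<forall>\<epsilon>>0. \<exists>K::real. \<forall>n::nat\<ge>1.
            measure M {x \<in> space M.
              \<bar>(\<Sum>i=1..n. \<xi> i x) - real n * integral\<^sup>L M (\<xi> 1)\<bar> / g (real n) > K} < \<epsilon>)"
proof -
  interpret prob_space M
    by (rule assms(1))
  note hyps = assms(2-5,7-10)
  show ?thesis
    using deviation_power_bound[OF hyps] deviation_tight[OF hyps] by blast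
qed

end
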